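(* Let $X$ and $T$ be topological spaces such that $X$ has the fixed point property with respect to $T$, and let $S$ be a retract of $T$ (i.e. there are continuous maps $j\colon S\to T$ and $r\colon T\to S$ with $rj=\mathrm{id}_S$). Then $X$ also has the fixed point property with respect to $S$.
   Context: A continuous family of self-maps of a topological space $X$ parametrized by a topological space $T$ is a continuous map $f\colon T\times X\to X$. A continuous family of fixed points of such $f$ is a continuous map $p\colon T\to X$ with $f(t,p(t))=p(t)$ for all $t\in T$. The space $X$ has the fixed point property with respect to $T$ if every continuous family $f\colon T\times X\to X$ of self-maps of $X$ admits at least one continuous family of fixed points. *)

theory Defs
  imports "HOL-Analysis.Analysis"
begin

definition continuous_family_of_fixed_points ::
  "'b topology \<Rightarrow> 'a topology \<Rightarrow> ('b \<times> 'a \<Rightarrow> 'a) \<Rightarrow> ('b \<Rightarrow> 'a) \<Rightarrow> bool" where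
  "continuous_family_of_fixed_points T X f p \<longleftrightarrow>
     continuous_map T X p \<and> (\<forall>t\<in>topspace T. f (t, p t) = p t)"

definition fixed_point_property_wrt :: "'a topology \<Rightarrow> 'b topology \<Rightarrow> bool" where
  "fixed_point_property_wrt X T \<longleftrightarrow>
     (\<forall>f. continuous_map (prod_topology T X) X f \<longrightarrow>
          (\<exists>p. continuous_family_of_fixed_points T X f p))"

end

theory Submission
  imports Defs
begin

text \<open>Given a family f over S, the family (t, x) \<mapsto> f (r t, x) over T has a continuous family
  of fixed points p; then p \<circ> j is one for f, because r (j s) = s.\<close>

lemma continuous_map_reparametrize:
  assumes "continuous_map T S r" and "continuous_map (prod_topology S X) Y f"
  shows "continuous_map (prod_topology T X) Y (\<lambda>(t, x). f (r t, x))"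
proof -
  have "continuous_map (prod_topology T X) (prod_topology S X) (\<lambda>(t, x). (r t, x))"
    using continuous_map_compose[OF continuous_map_fst assms(1)]
    by (simp add: continuous_map_pairwise case_prod_unfold o_def continuous_map_snd)
  from continuous_map_compose[OF this assms(2)] show ?thesis
    by (simp add: case_prod_unfold o_def)
qed

lemma continuous_family_of_fixed_points_compose:
  assumes p: "continuous_family_of_fixed_points T X g p"
    and j: "continuous_map S T j"
    and fg: "\<And>s x. s \<in> topspace S \<Longrightarrow> g (j s, x) = f (s, x)"
  shows "continuous_family_of_fixed_points S X f (p \<circ> j)"
  unfolding continuous_family_of_fixed_points_def
proof
  show "continuous_map S X (p \<circ> j)"
    using p j continuous_map_compose unfolding continuous_family_of_fixed_points_def by blast
  show "\<forall>s\<in>topspace S. f (s, (p \<circ> j) s) = (p \<circ> j) s"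
  proof
    fix s assume s: "s \<in> topspace S"
    then have "j s \<in> topspace T"
      using j by (auto simp: continuous_map_def)
    then have "g (j s, p (j s)) = p (j s)"
      using p unfolding continuous_family_of_fixed_points_def by blast
    then show "f (s, (p \<circ> j) s) = (p \<circ> j) s"
      using fg[OF s] by simp
  qed
qed

theorem proposition3p1:
  fixes X :: "'a topology" and T :: "'b topology" and S :: "'c topology"
    and j :: "'c \<Rightarrow> 'b" and r :: "'b \<Rightarrow> 'c"
  assumes "fixed_point_property_wrt X T"
    and "continuous_map S T j" and "continuous_map T S r"
    and "\<And>s. s \<in> topspace S \<Longrightarrow> r (j s) = s"
  shows "fixed_point_property_wrt X S"
  unfolding fixed_point_property_wrt_def
proof (intro allI impI)
  fix f assume "continuous_map (prod_topology S X) X f"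
  then have "continuous_map (prod_topology T X) X (\<lambda>(t, x). f (r t, x))"
    using assms(3) by (rule continuous_map_reparametrize[rotated])
  then obtain p where "continuous_family_of_fixed_points T X (\<lambda>(t, x). f (r t, x)) p"
    using assms(1) unfolding fixed_point_property_wrt_def by blast
  then have "continuous_family_of_fixed_points S X f (p \<circ> j)"
    using assms(2,4) by (intro continuous_family_of_fixed_points_compose) auto
  then show "\<exists>q. continuous_family_of_fixed_points S X f q" by blast
qed

end
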